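(* Let $A\in\mathsf{M}_n(\mathbb{C})$ be nonsingular and $h$-cyclic, and let $P=\{V_1,\dots,V_h\}$ be a partition of $\{1,\dots,n\}$ describing the $h$-cyclic structure of $A$. Then $|V_i|=|V_j|$ for all $i,j\in\{1,\dots,h\}$.
   Context: The digraph $\Gamma_A$ of $A=[a_{ij}]\in\mathsf{M}_n(\mathbb{C})$ has vertex set $\{1,\dots,n\}$ and arc set $\{(i,j): a_{ij}\neq 0\}$. A digraph with vertex set $V$ and arc set $E$ is cyclically $h$-partite with partition $P=\{V_1,\dots,V_h\}$ of $V$ (into $h$ nonempty parts) if for every arc $(i,j)\in E$ there is $\ell\in\{1,\dots,h\}$ with $i\in V_\ell$ and $j\in V_{\ell+1}$, where $V_{h+1}:=V_1$. The matrix $A$ is $h$-cyclic with partition $P$ (equivalently, $P$ describes the $h$-cyclic structure of $A$) if $\Gamma_A$ is cyclically $h$-partite with partition $P$; i.e., $a_{ij}\neq 0$ implies $i\in V_\ell$, $j\in V_{\ell+1}$ for some $\ell$. *)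

theory Defs
  imports "HOL-Analysis.Analysis"
begin

text \<open>Matrices in M_n(C) are rendered as complex ^'n ^'n, with the vertex set
  {1,...,n} represented by the finite index type 'n (n = CARD('n)).\<close>

definition is_partition :: "nat \<Rightarrow> (nat \<Rightarrow> 'a set) \<Rightarrow> 'a set \<Rightarrow> bool" where
  "is_partition h V S \<longleftrightarrow>
     (\<forall>l\<in>{1..h}. V l \<noteq> {}) \<and>
     (\<forall>l\<in>{1..h}. \<forall>m\<in>{1..h}. l \<noteq> m \<longrightarrow> V l \<inter> V m = {}) \<and>
     (\<Union>l\<in>{1..h}. V l) = S"

definition cyc_next :: "nat \<Rightarrow> nat \<Rightarrow> nat" where
  "cyc_next h l = (if l = h then 1 else l + 1)"

definition digraph_arcs :: "complex ^'n ^'n \<Rightarrow> ('n \<times> 'n) set" where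
  "digraph_arcs A = {(i, j). A $ i $ j \<noteq> 0}"

definition cyclically_partite :: "'a set \<Rightarrow> ('a \<times> 'a) set \<Rightarrow> nat \<Rightarrow> (nat \<Rightarrow> 'a set) \<Rightarrow> bool" where
  "cyclically_partite Vs E h V \<longleftrightarrow>
     h \<ge> 1 \<and> is_partition h V Vs \<and>
     (\<forall>(i, j)\<in>E. \<exists>l\<in>{1..h}. i \<in> V l \<and> j \<in> V (cyc_next h l))"

definition h_cyclic_with :: "complex ^'n ^'n \<Rightarrow> nat \<Rightarrow> (nat \<Rightarrow> 'n set) \<Rightarrow> bool" where
  "h_cyclic_with A h V \<longleftrightarrow> cyclically_partite UNIV (digraph_arcs A) h V"

end

theory Submission
  imports Defs
begin

text \<open>The rows of A indexed by V_l are linearly independent, and since every arc of the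
  digraph leaving V_l ends in V_(l+1), they lie in the coordinate subspace spanned by
  V_(l+1). Hence |V_l| \<le> |V_(l+1)| for every l, and going once around the cycle turns
  these inequalities into equalities.\<close>

lemma card_le_card_of_rows_supported:
  fixes A :: "'a::field ^'n ^'n"
  assumes "invertible A"
    and supported: "\<And>i j. i \<in> I \<Longrightarrow> j \<notin> J \<Longrightarrow> A $ i $ j = 0"
  shows "card I \<le> card J"
proof -
  have det: "det A \<noteq> 0"
    using \<open>invertible A\<close> by (simp add: invertible_det_nz)
  have inj: "inj (\<lambda>i. row i A)"
    using det det_identical_rows by (metis injI)
  have "vec.independent (rows A)"
    using det det_dependent_rows[of A] by blast
  then have "vec.independent ((\<lambda>i. row i A) ` I)"
    by (rule vec.independent_mono) (auto simp: rows_def)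
  moreover have "(\<lambda>i. row i A) ` I \<subseteq> {x. \<forall>j. j \<notin> J \<longrightarrow> x $ j = 0}"
    using supported by (auto simp: row_def)
  ultimately have "card ((\<lambda>i. row i A) ` I) \<le> vec.dim {x::'a^'n. \<forall>j. j \<notin> J \<longrightarrow> x $ j = 0}"
    by (rule vec.independent_card_le_dim[rotated])
  then show ?thesis
    by (simp add: dim_substandard_cart card_image inj_on_subset[OF inj])
qed

lemma cyclically_partite_arc:
  assumes "cyclically_partite S E h V"
    and "l \<in> {1..h}" "i \<in> V l" "(i, j) \<in> E"
  shows "j \<in> V (cyc_next h l)"
proof -
  obtain l' where l': "l' \<in> {1..h}" "i \<in> V l'" "j \<in> V (cyc_next h l')"
    using assms(1,4) unfolding cyclically_partite_def by blast
  have "l' = l"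
    using assms(1-3) l'(1,2) unfolding cyclically_partite_def is_partition_def by blast
  then show ?thesis
    using l'(3) by simp
qed

lemma h_cyclic_card_le_card_next:
  assumes "invertible A" and cyc: "h_cyclic_with A h V" and "l \<in> {1..h}"
  shows "card (V l) \<le> card (V (cyc_next h l))"
proof (rule card_le_card_of_rows_supported[OF \<open>invertible A\<close>])
  fix i j
  assume "i \<in> V l" "j \<notin> V (cyc_next h l)"
  then show "A $ i $ j = 0"
    using cyclically_partite_arc[of UNIV "digraph_arcs A" h V l i j] cyc \<open>l \<in> {1..h}\<close>
    unfolding h_cyclic_with_def digraph_arcs_def by blast
qed

lemma cyclic_mono_imp_constant:
  fixes f :: "nat \<Rightarrow> 'a::order"
  assumes step: "\<And>l. l \<in> {1..h} \<Longrightarrow> f l \<le> f (cyc_next h l)"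
    and "i \<in> {1..h}" "j \<in> {1..h}"
  shows "f i = f j"
proof -
  have Suc_step: "f l \<le> f (Suc l)" if "l \<in> {1..<h}" for l
    using step[of l] that by (simp add: cyc_next_def)
  have mono: "f l \<le> f k" if "1 \<le> l" "l \<le> k" "k \<le> h" for l k
    using that by (intro lift_Suc_mono_le_ivl[of "{1..<h}" f, OF Suc_step]) auto
  have wrap: "f h \<le> f 1"
    using step[of h] \<open>i \<in> {1..h}\<close> by (simp add: cyc_next_def)
  have "f k = f 1" if "k \<in> {1..h}" for k
  proof -
    have "f 1 \<le> f k" "f k \<le> f h"
      using that by (auto intro: mono)
    then show ?thesis
      using wrap by (meson order.antisym order.trans)
  qed
  then show ?thesis
    using \<open>i \<in> {1..h}\<close> \<open>j \<in> {1..h}\<close> by metis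
qed

theorem theorem3p1:
  fixes A :: "complex ^'n ^'n" and h :: nat and V :: "nat \<Rightarrow> 'n set"
  assumes "invertible A"
    and "h_cyclic_with A h V"
  shows "\<forall>i\<in>{1..h}. \<forall>j\<in>{1..h}. card (V i) = card (V j)"
  using cyclic_mono_imp_constant[of h "\<lambda>l. card (V l)"]
    h_cyclic_card_le_card_next[OF assms] by blast

end
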